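(* Let $p,q\in\mathbb{G}^n$ with $\|p-q\|\ge2$. Then $\lceil(p+q)/2\rceil\notin\{p,q\}$ and $\lfloor(p+q)/2\rfloor\notin\{p,q\}$. Moreover, $\|p-\lceil(p+q)/2\rceil\|<\|p-q\|$ and $\|p-\lfloor(p+q)/2\rfloor\|<\|p-q\|$.
   Context: Fix an integer $k\ge1$. The infinite $k$-star $\mathbb{T}$ is $\mathbb{R}_+\times\{1,\dots,k\}$ with all points $(0,s)$ identified to a point $0$; $(x,s)$ is also written $x$; $\mathrm{dist}((x,s),(x',s'))=|x-x'|$ if $s=s'$ and $x+x'$ otherwise. The midpoint $(x+x')/2$ is the unique $u\in\mathbb{T}$ with $\mathrm{dist}(x,u)=\mathrm{dist}(u,x')=\mathrm{dist}(x,x')/2$. $x$ is integral if $\mathrm{dist}(x,0)\in\mathbb{Z}$, proper half-integral if $2\mathrm{dist}(x,0)\in\mathbb{Z}$ but $\mathrm{dist}(x,0)\notin\mathbb{Z}$. $\mathbb{G}\subseteq\mathbb{T}\times\mathbb{R}$ is the set of $(x,y)$ with $x,y$ both integral or both proper half-integral; $(x,y)\in\mathbb{G}$ is integral if both are integral, and then even if $\mathrm{dist}(x,0)-y$ is even, odd otherwise. For $p=(x,y),q=(x',y')\in\mathbb{T}\times\mathbb{R}$, $\|p-q\|=\mathrm{dist}(x,x')+|y-y'|$ and $(p+q)/2=((x+x')/2,(y+y')/2)$. $p,q\in\mathbb{G}$ are adjacent if $\|p-q\|=1$ and exactly one is integral; then $p\prec q$ if $p$ is even or $q$ is odd, and $\preceq$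 is the reflexive transitive closure. For $p,q\in\mathbb{G}$ there is a unique pair $u\preceq v$ in $\mathbb{G}$ with $(u+v)/2=(p+q)/2$; set $\lfloor(p+q)/2\rfloor=u$, $\lceil(p+q)/2\rceil=v$. On $\mathbb{G}^n$ these operations are taken componentwise, and $\|p-q\|:=\max_{1\le i\le n}\|p_i-q_i\|$. *)

theory Defs
  imports Complex_Main
begin

text \<open>Points of the infinite k-star: pairs (x, s) with x \<ge> 0, s \<in> {1..k};
  the identification of all (0, s) is realised by the canonical representative (0, 1).\<close>
type_synonym tpt = "real \<times> nat"
type_synonym gpt = "tpt \<times> real"

definition tvalid :: "nat \<Rightarrow> tpt \<Rightarrow> bool" where
  "tvalid k a \<longleftrightarrow> fst a \<ge> 0 \<and> snd a \<in> {1..k} \<and> (fst a = 0 \<longrightarrow> snd a = 1)"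

definition tzero :: tpt where "tzero = (0, 1)"

definition tdist :: "tpt \<Rightarrow> tpt \<Rightarrow> real" where
  "tdist a b = (if snd a = snd b then \<bar>fst a - fst b\<bar> else fst a + fst b)"

definition tmid :: "nat \<Rightarrow> tpt \<Rightarrow> tpt \<Rightarrow> tpt" where
  "tmid k a b = (THE u. tvalid k u \<and> tdist a u = tdist a b / 2 \<and> tdist u b = tdist a b / 2)"

definition t_integral :: "tpt \<Rightarrow> bool" where
  "t_integral a \<longleftrightarrow> tdist a tzero \<in> \<int>"

definition t_phalf :: "tpt \<Rightarrow> bool" where
  "t_phalf a \<longleftrightarrow> 2 * tdist a tzero \<in> \<int> \<and> tdist a tzero \<notin> \<int>"

definition r_phalf :: "real \<Rightarrow> bool" where
  "r_phalf y \<longleftrightarrow> 2 * y \<in> \<int> \<and> y \<notin> \<int>"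

definition Grid :: "nat \<Rightarrow> gpt set" where
  "Grid k = {(x, y). tvalid k x \<and> ((t_integral x \<and> y \<in> \<int>) \<or> (t_phalf x \<and> r_phalf y))}"

definition g_integral :: "gpt \<Rightarrow> bool" where
  "g_integral p \<longleftrightarrow> t_integral (fst p) \<and> snd p \<in> \<int>"

definition g_even :: "gpt \<Rightarrow> bool" where
  "g_even p \<longleftrightarrow> g_integral p \<and> (\<exists>m::int. tdist (fst p) tzero - snd p = 2 * of_int m)"

definition g_odd :: "gpt \<Rightarrow> bool" where
  "g_odd p \<longleftrightarrow> g_integral p \<and> \<not> g_even p"

definition gnorm :: "gpt \<Rightarrow> gpt \<Rightarrow> real" where
  "gnorm p q = tdist (fst p) (fst q) + \<bar>snd p - snd q\<bar>"

definition gmid :: "nat \<Rightarrow> gpt \<Rightarrow> gpt \<Rightarrow> gpt" where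
  "gmid k p q = (tmid k (fst p) (fst q), (snd p + snd q) / 2)"

definition g_adj :: "nat \<Rightarrow> gpt \<Rightarrow> gpt \<Rightarrow> bool" where
  "g_adj k p q \<longleftrightarrow> p \<in> Grid k \<and> q \<in> Grid k \<and> gnorm p q = 1 \<and> (g_integral p \<noteq> g_integral q)"

definition g_prec :: "nat \<Rightarrow> gpt \<Rightarrow> gpt \<Rightarrow> bool" where
  "g_prec k p q \<longleftrightarrow> g_adj k p q \<and> (g_even p \<or> g_odd q)"

definition g_preceq :: "nat \<Rightarrow> gpt \<Rightarrow> gpt \<Rightarrow> bool" where
  "g_preceq k = (g_prec k)\<^sup>*\<^sup>*"

definition g_floorceil :: "nat \<Rightarrow> gpt \<Rightarrow> gpt \<Rightarrow> gpt \<times> gpt" where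
  "g_floorceil k p q = (THE uv. fst uv \<in> Grid k \<and> snd uv \<in> Grid k \<and> g_preceq k (fst uv) (snd uv)
      \<and> gmid k (fst uv) (snd uv) = gmid k p q)"

definition g_floor :: "nat \<Rightarrow> gpt \<Rightarrow> gpt \<Rightarrow> gpt" where
  "g_floor k p q = fst (g_floorceil k p q)"

definition g_ceil :: "nat \<Rightarrow> gpt \<Rightarrow> gpt \<Rightarrow> gpt" where
  "g_ceil k p q = snd (g_floorceil k p q)"

definition v_floor :: "nat \<Rightarrow> ('n \<Rightarrow> gpt) \<Rightarrow> ('n \<Rightarrow> gpt) \<Rightarrow> ('n \<Rightarrow> gpt)" where
  "v_floor k p q = (\<lambda>i. g_floor k (p i) (q i))"

definition v_ceil :: "nat \<Rightarrow> ('n \<Rightarrow> gpt) \<Rightarrow> ('n \<Rightarrow> gpt) \<Rightarrow> ('n \<Rightarrow> gpt)" where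
  "v_ceil k p q = (\<lambda>i. g_ceil k (p i) (q i))"

definition vnorm :: "('n::finite \<Rightarrow> gpt) \<Rightarrow> ('n \<Rightarrow> gpt) \<Rightarrow> real" where
  "vnorm p q = Max (range (\<lambda>i. gnorm (p i) (q i)))"

end

theory Submission
  imports Defs
begin

text \<open>A rounding pair \<open>u \<preceq> v\<close> of the midpoint \<open>m = (p + q)/2\<close> consists of points at distance at most
  1 from each other: a chain \<open>u \<prec> c \<prec> v\<close> runs from an even to an odd integral point, and two
  integral points are at odd distance exactly when their parities differ. Hence floor and ceiling
  lie within \<open>1/2\<close> of \<open>m\<close> in every component, which gives
  \<open>\<parallel>p - w\<parallel> \<le> \<parallel>p - q\<parallel>/2 + 1/2 < \<parallel>p - q\<parallel>\<close> and rules out \<open>w \<in> {p, q}\<close> as soon as \<open>\<parallel>p - q\<parallel> > 1\<close>.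

  Most of the work shows that the rounding pair exists and is unique, so that the definite
  descriptions defining floor and ceiling are meaningful. In doubled coordinates a grid point is
  \<open>(a, b)\<close> with \<open>a \<equiv> b (mod 2)\<close> on some ray of the star. The midpoint determines which of the shapes
  \<open>u = v\<close>, \<open>u \<prec> v\<close>, \<open>u \<prec> c \<prec> v\<close> occurs, parity arguments modulo 2 and 4 then pin down the pair,
  and existence is an explicit construction on the ray of the midpoint.\<close>

section \<open>Distance and midpoints on the star\<close>

lemma tdist_commute: "tdist a b = tdist b a"
  by (auto simp: tdist_def)

lemma tdist_self [simp]: "tdist a a = 0"
  by (simp add: tdist_def)

lemma tdist_nonneg: "0 \<le> fst a \<Longrightarrow> 0 \<le> fst b \<Longrightarrow> 0 \<le> tdist a b"
  by (simp add: tdist_def)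

lemma tdist_triangle:
  "0 \<le> fst a \<Longrightarrow> 0 \<le> fst b \<Longrightarrow> 0 \<le> fst c \<Longrightarrow> tdist a c \<le> tdist a b + tdist b c"
  by (auto simp: tdist_def)

lemma tdist_eq_0D: "tvalid k a \<Longrightarrow> tvalid k b \<Longrightarrow> tdist a b = 0 \<Longrightarrow> a = b"
  by (cases a; cases b) (auto simp: tdist_def tvalid_def split: if_splits)

lemma tdist_tzero: "tvalid k a \<Longrightarrow> tdist a tzero = fst a"
  by (auto simp: tdist_def tvalid_def tzero_def)

definition ray :: "nat \<Rightarrow> real \<Rightarrow> tpt" where
  "ray s r = (if r = 0 then tzero else (r, s))"

lemma fst_ray [simp]: "fst (ray s r) = r"
  by (simp add: ray_def tzero_def)

lemma tvalid_ray: "s \<in> {1..k} \<Longrightarrow> 0 \<le> r \<Longrightarrow> tvalid k (ray s r)"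
  by (auto simp: ray_def tvalid_def tzero_def)

lemma ray_fst_snd: "tvalid k x \<Longrightarrow> ray (snd x) (fst x) = x"
  by (cases x) (auto simp: ray_def tvalid_def tzero_def)

lemma tdist_ray:
  "0 \<le> r \<Longrightarrow> 0 \<le> r' \<Longrightarrow> tdist (ray s r) (ray s' r') = (if s = s' then \<bar>r - r'\<bar> else r + r')"
  by (auto simp: ray_def tdist_def tzero_def)

lemma tmid_eq:
  assumes "tvalid k a" "tvalid k b" "tvalid k u"
    and "tdist a u = tdist a b / 2" "tdist u b = tdist a b / 2"
  shows "tmid k a b = u"
  unfolding tmid_def
proof (rule the_equality)
  fix w assume "tvalid k w \<and> tdist a w = tdist a b / 2 \<and> tdist w b = tdist a b / 2"
  with assms show "w = u"
    by (cases a; cases b; cases u; cases w) (auto simp: tvalid_def tdist_def abs_if field_simps split: if_splits)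
qed (use assms in simp)

definition ray_mid :: "nat \<Rightarrow> real \<Rightarrow> nat \<Rightarrow> real \<Rightarrow> tpt" where
  "ray_mid s r s' r' =
    (if s = s' then ray s ((r + r') / 2) else if r' \<le> r then ray s ((r - r') / 2) else ray s' ((r' - r) / 2))"

lemma ray_mid_halfway:
  assumes "s \<in> {1..k}" "s' \<in> {1..k}" "0 \<le> r" "0 \<le> r'"
  shows "tvalid k (ray_mid s r s' r')"
    and "tdist (ray s r) (ray_mid s r s' r') = tdist (ray s r) (ray s' r') / 2"
    and "tdist (ray_mid s r s' r') (ray s' r') = tdist (ray s r) (ray s' r') / 2"
  using assms unfolding ray_mid_def by (auto simp: tdist_ray tvalid_ray field_simps)

lemma tmid_ray:
  assumes "s \<in> {1..k}" "s' \<in> {1..k}" "0 \<le> r" "0 \<le> r'"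
  shows "tmid k (ray s r) (ray s' r') = ray_mid s r s' r'"
  using ray_mid_halfway[OF assms] assms by (intro tmid_eq tvalid_ray) simp_all

lemma tmid_halfway:
  assumes "tvalid k a" "tvalid k b"
  shows "tvalid k (tmid k a b)" "tdist a (tmid k a b) = tdist a b / 2" "tdist (tmid k a b) b = tdist a b / 2"
proof -
  have s: "snd a \<in> {1..k}" "snd b \<in> {1..k}" and r: "0 \<le> fst a" "0 \<le> fst b"
    using assms by (auto simp: tvalid_def)
  note ray_fst_snd[OF assms(1), symmetric] ray_fst_snd[OF assms(2), symmetric]
  then show "tvalid k (tmid k a b)" "tdist a (tmid k a b) = tdist a b / 2" "tdist (tmid k a b) b = tdist a b / 2"
    using ray_mid_halfway[OF s r] tmid_ray[OF s r] by metis+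
qed

lemma tmid_commute: "tvalid k a \<Longrightarrow> tvalid k b \<Longrightarrow> tmid k a b = tmid k b a"
  using tmid_halfway[of k b a] by (intro tmid_eq) (simp_all add: tdist_commute)

lemma tmid_self: "tvalid k a \<Longrightarrow> tmid k a a = a"
  by (rule tmid_eq) simp_all

lemma gnorm_commute: "gnorm p q = gnorm q p"
  by (simp add: gnorm_def tdist_commute abs_minus_commute)

lemma gnorm_self [simp]: "gnorm p p = 0"
  by (simp add: gnorm_def)

lemma gnorm_triangle:
  "0 \<le> fst (fst p) \<Longrightarrow> 0 \<le> fst (fst q) \<Longrightarrow> 0 \<le> fst (fst r) \<Longrightarrow> gnorm p r \<le> gnorm p q + gnorm q r"
  using tdist_triangle[of "fst p" "fst q" "fst r"] by (simp add: gnorm_def)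

lemma gnorm_eq_0D:
  assumes "tvalid k (fst p)" "tvalid k (fst q)" "gnorm p q = 0"
  shows "p = q"
proof -
  have "0 \<le> tdist (fst p) (fst q)"
    using assms(1,2) by (simp add: tdist_nonneg tvalid_def)
  then have "tdist (fst p) (fst q) = 0" "snd p = snd q"
    using assms(3) by (auto simp: gnorm_def)
  then show ?thesis
    using tdist_eq_0D[OF assms(1,2)] by (simp add: prod_eq_iff)
qed

lemma gmid_halfway:
  assumes "tvalid k (fst p)" "tvalid k (fst q)"
  shows "tvalid k (fst (gmid k p q))"
    and "tdist (fst p) (fst (gmid k p q)) = tdist (fst p) (fst q) / 2"
    and "tdist (fst (gmid k p q)) (fst q) = tdist (fst p) (fst q) / 2"
    and "\<bar>snd p - snd (gmid k p q)\<bar> = \<bar>snd p - snd q\<bar> / 2"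
    and "\<bar>snd (gmid k p q) - snd q\<bar> = \<bar>snd p - snd q\<bar> / 2"
    and "gnorm p (gmid k p q) = gnorm p q / 2"
    and "gnorm (gmid k p q) q = gnorm p q / 2"
  using tmid_halfway[OF assms] by (auto simp: gmid_def gnorm_def abs_if field_simps)

lemma gmid_commute: "tvalid k (fst p) \<Longrightarrow> tvalid k (fst q) \<Longrightarrow> gmid k p q = gmid k q p"
  by (simp add: gmid_def tmid_commute add.commute)

lemma gmid_self: "tvalid k (fst p) \<Longrightarrow> gmid k p p = p"
  by (simp add: gmid_def tmid_self)

section \<open>Half-integer coordinates and parity\<close>

lemma Grid_tvalid: "p \<in> Grid k \<Longrightarrow> tvalid k (fst p)"
  by (auto simp: Grid_def)

lemma Grid_nonneg: "p \<in> Grid k \<Longrightarrow> 0 \<le> fst (fst p)"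
  by (auto simp: Grid_def tvalid_def)

lemma half_of_int_in_Ints_iff: "(of_int a / 2 :: real) \<in> \<int> \<longleftrightarrow> even a"
proof
  assume "(of_int a / 2 :: real) \<in> \<int>"
  then obtain n where "(of_int a / 2 :: real) = of_int n"
    by (auto elim: Ints_cases)
  then have "a = 2 * n"
    by linarith
  then show "even a" by simp
qed (auto elim: evenE)

lemma double_in_Ints_half: "2 * (x :: real) \<in> \<int> \<Longrightarrow> \<exists>a. x = of_int a / 2"
  by (metis Ints_cases nonzero_mult_div_cancel_left zero_neq_numeral)

lemma Grid_half_coords:
  assumes "tvalid k x" "fst x = of_int a / 2"
  shows "(x, of_int b / 2) \<in> Grid k \<longleftrightarrow> even a = even b"
    and "g_integral (x, of_int b / 2) \<longleftrightarrow> even a \<and> even b"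
    and "g_even (x, of_int b / 2) \<longleftrightarrow> even a \<and> even b \<and> 4 dvd (a - b)"
proof -
  have tz: "tdist x tzero = of_int a / 2"
    using tdist_tzero[OF assms(1)] assms(2) by simp
  have quarter: "(of_int a / 2 - of_int b / 2 = (2 * of_int m :: real)) \<longleftrightarrow> a - b = 4 * m" for m
    by linarith
  show "(x, of_int b / 2) \<in> Grid k \<longleftrightarrow> even a = even b"
    using assms(1) by (auto simp: Grid_def t_integral_def t_phalf_def r_phalf_def tz half_of_int_in_Ints_iff)
  show integral: "g_integral (x, of_int b / 2) \<longleftrightarrow> even a \<and> even b"
    by (simp add: g_integral_def t_integral_def tz half_of_int_in_Ints_iff)
  show "g_even (x, of_int b / 2) \<longleftrightarrow> even a \<and> even b \<and> 4 dvd (a - b)"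
    by (auto simp: g_even_def integral tz quarter)
qed

lemma Grid_coordsE:
  assumes "p \<in> Grid k"
  obtains a b where "fst (fst p) = of_int a / 2" "snd p = of_int b / 2" "0 \<le> a" "even a = even b"
    and "g_integral p \<longleftrightarrow> even a" and "g_even p \<longleftrightarrow> even a \<and> 4 dvd (a - b)"
proof -
  obtain x y where p: "p = (x, y)" by fastforce
  have x: "tvalid k x"
    using assms by (simp add: p Grid_def)
  note tz = tdist_tzero[OF x]
  have "2 * fst x \<in> \<int>" "2 * y \<in> \<int>"
    using assms by (auto simp: p Grid_def t_integral_def t_phalf_def r_phalf_def tz)
  then obtain a b where ab: "fst x = of_int a / 2" "y = of_int b / 2"
    using double_in_Ints_half by metis
  have "0 \<le> a"
    using x ab(1) by (simp add: tvalid_def)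
  moreover note Grid_half_coords[OF x ab(1), of b]
  ultimately show ?thesis
    using that ab assms unfolding p ab(2) by auto
qed

lemma two_abs_half_diff: "2 * \<bar>(of_int a / 2 :: real) - of_int b / 2\<bar> = of_int \<bar>a - b\<bar>"
  by (simp add: abs_if field_simps)

lemma two_tdist_half_coords:
  assumes "fst x = of_int a / 2" "fst x' = of_int a' / 2"
  obtains d :: int where "2 * tdist x x' = of_int d" "d = \<bar>a - a'\<bar> \<or> d = a + a'"
proof (cases "snd x = snd x'")
  case True
  then show ?thesis
    using that[of "\<bar>a - a'\<bar>"] two_abs_half_diff[of a a'] assms by (simp add: tdist_def)
next
  case False
  then show ?thesis
    using that[of "a + a'"] assms by (simp add: tdist_def field_simps)
qed

lemma Grid_dist_parity:
  assumes "u \<in> Grid k" "v \<in> Grid k"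
  obtains n m :: int
  where "2 * tdist (fst u) (fst v) = of_int n" "2 * \<bar>snd u - snd v\<bar> = of_int m" "0 \<le> n" "0 \<le> m"
    and "odd n \<longleftrightarrow> g_integral u \<noteq> g_integral v" "odd m \<longleftrightarrow> g_integral u \<noteq> g_integral v"
proof -
  obtain a b where u: "fst (fst u) = of_int a / 2" "snd u = of_int b / 2" "0 \<le> a" "even a = even b"
    "g_integral u \<longleftrightarrow> even a"
    using assms(1) by (rule Grid_coordsE)
  obtain a' b' where v: "fst (fst v) = of_int a' / 2" "snd v = of_int b' / 2" "0 \<le> a'" "even a' = even b'"
    "g_integral v \<longleftrightarrow> even a'"
    using assms(2) by (rule Grid_coordsE)
  obtain n where n: "2 * tdist (fst u) (fst v) = of_int n" "n = \<bar>a - a'\<bar> \<or> n = a + a'"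
    using two_tdist_half_coords[OF u(1) v(1)] .
  show ?thesis
  proof (rule that[OF n(1), of "\<bar>b - b'\<bar>"])
    show "2 * \<bar>snd u - snd v\<bar> = of_int \<bar>b - b'\<bar>"
      unfolding u(2) v(2) by (rule two_abs_half_diff)
    show "0 \<le> n" "0 \<le> \<bar>b - b'\<bar>"
      using n(2) u(3) v(3) by auto
    show "odd n \<longleftrightarrow> g_integral u \<noteq> g_integral v" "odd \<bar>b - b'\<bar> \<longleftrightarrow> g_integral u \<noteq> g_integral v"
      using n(2) u(4,5) v(4,5) by auto
  qed
qed

lemma gnorm_Grid_in_Ints: "u \<in> Grid k \<Longrightarrow> v \<in> Grid k \<Longrightarrow> gnorm u v \<in> \<int>"
proof -
  assume "u \<in> Grid k" "v \<in> Grid k"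
  then obtain n m :: int where nm: "2 * tdist (fst u) (fst v) = of_int n" "2 * \<bar>snd u - snd v\<bar> = of_int m"
    and "odd n \<longleftrightarrow> odd m"
    by (rule Grid_dist_parity) auto
  then obtain l where "n + m = 2 * l"
    by (metis evenE odd_add)
  then have "gnorm u v = of_int l"
    using nm by (simp add: gnorm_def)
  then show ?thesis by simp
qed

lemma g_adj_halves:
  assumes "g_adj k u v"
  shows "tdist (fst u) (fst v) = 1/2" "\<bar>snd u - snd v\<bar> = 1/2"
proof -
  have uv: "u \<in> Grid k" "v \<in> Grid k" "gnorm u v = 1" "g_integral u \<noteq> g_integral v"
    using assms by (auto simp: g_adj_def)
  obtain n m :: int where nm: "2 * tdist (fst u) (fst v) = of_int n" "2 * \<bar>snd u - snd v\<bar> = of_int m"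
    and "0 \<le> n" "0 \<le> m" "odd n" "odd m"
    by (rule Grid_dist_parity[OF uv(1,2)]) (use uv(4) in auto)
  moreover have "n + m = 2"
    using nm uv(3) by (simp add: gnorm_def)
  ultimately have "n = 1" "m = 1"
    by presburger+
  then show "tdist (fst u) (fst v) = 1/2" "\<bar>snd u - snd v\<bar> = 1/2"
    using nm by simp_all
qed

lemma Grid_eq_if_same_integral_close:
  assumes "u \<in> Grid k" "v \<in> Grid k" "g_integral u = g_integral v"
    and "tdist (fst u) (fst v) < 1" "\<bar>snd u - snd v\<bar> < 1"
  shows "u = v"
proof -
  obtain n m :: int where nm: "2 * tdist (fst u) (fst v) = of_int n" "2 * \<bar>snd u - snd v\<bar> = of_int m"
    and "0 \<le> n" "0 \<le> m" "even n" "even m"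
    by (rule Grid_dist_parity[OF assms(1,2)]) (use assms(3) in auto)
  moreover have "of_int n < (2::real)" "of_int m < (2::real)"
    using nm assms(4,5) by auto
  then have "n < 2" "m < 2"
    by simp_all
  ultimately have "n = 0" "m = 0"
    by presburger+
  then have "gnorm u v = 0"
    using nm by (simp add: gnorm_def)
  then show ?thesis
    using assms(1,2) by (intro gnorm_eq_0D[of k]) (simp_all add: Grid_tvalid)
qed

lemma gnorm_integral_parity:
  assumes "u \<in> Grid k" "v \<in> Grid k" "g_integral u" "g_integral v"
  obtains n :: int where "gnorm u v = of_int n" "0 \<le> n" "even n \<longleftrightarrow> (g_even u \<longleftrightarrow> g_even v)"
proof -
  obtain a b where u: "fst (fst u) = of_int a / 2" "snd u = of_int b / 2" "0 \<le> a"
    "even a" "even b" "g_even u \<longleftrightarrow> 4 dvd (a - b)"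
    by (rule Grid_coordsE[OF assms(1)]) (use assms(3) in auto)
  obtain a' b' where v: "fst (fst v) = of_int a' / 2" "snd v = of_int b' / 2" "0 \<le> a'"
    "even a'" "even b'" "g_even v \<longleftrightarrow> 4 dvd (a' - b')"
    by (rule Grid_coordsE[OF assms(2)]) (use assms(4) in auto)
  obtain d where d: "2 * tdist (fst u) (fst v) = of_int d" "d = \<bar>a - a'\<bar> \<or> d = a + a'"
    using two_tdist_half_coords[OF u(1) v(1)] .
  \<comment> \<open>for even coordinates, \<open>\<bar>a - a'\<bar>\<close> and \<open>a + a'\<close> are both congruent to \<open>a - a'\<close> modulo 4\<close>
  have "4 dvd (d + \<bar>b - b'\<bar>) \<longleftrightarrow> (4 dvd (a - b) \<longleftrightarrow> 4 dvd (a' - b'))"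
    using d(2) u(4,5) v(4,5) by (auto simp: abs_if) presburger+
  moreover obtain n where "d + \<bar>b - b'\<bar> = 2 * n"
    using d(2) u(4,5) v(4,5) by (metis abs_if evenE even_add even_minus even_diff)
  moreover have "gnorm u v = of_int (d + \<bar>b - b'\<bar>) / 2"
    using d(1) two_abs_half_diff[of b b'] unfolding gnorm_def u(2) v(2) by (simp add: field_simps)
  ultimately show ?thesis
    using that[of n] d(2) u(3,6) v(3,6) by auto presburger+
qed

lemma Grid_eq_if_same_parity_close:
  assumes "u \<in> Grid k" "v \<in> Grid k" "(g_even u \<and> g_even v) \<or> (g_odd u \<and> g_odd v)" "gnorm u v < 2"
  shows "u = v"
proof -
  have "g_integral u" "g_integral v"
    using assms(3) by (auto simp: g_even_def g_odd_def)
  then obtain n :: int where n: "gnorm u v = of_int n" "0 \<le> n" "even n"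
    by (rule gnorm_integral_parity[OF assms(1,2)]) (use assms(3) in \<open>auto simp: g_odd_def\<close>)
  moreover have "n < 2"
    using n(1) assms(4) by simp
  ultimately have "n = 0"
    by presburger
  then show ?thesis
    using n(1) assms(1,2) by (intro gnorm_eq_0D[of k]) (simp_all add: Grid_tvalid)
qed

section \<open>Rounding pairs and their uniqueness\<close>

lemma g_adj_commute: "g_adj k u v \<longleftrightarrow> g_adj k v u"
  by (auto simp: g_adj_def gnorm_commute)

lemma g_prec_cases: "g_prec k u v \<Longrightarrow> (g_even u \<and> \<not> g_integral v) \<or> (\<not> g_integral u \<and> g_odd v)"
  by (auto simp: g_prec_def g_adj_def g_odd_def g_even_def)

lemma g_prec_asym: "g_prec k u v \<Longrightarrow> \<not> g_prec k v u"
  by (auto simp: g_prec_def g_adj_def g_odd_def g_even_def)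

lemma g_adj_prec: "g_adj k u v \<Longrightarrow> g_prec k u v \<or> g_prec k v u"
  by (auto simp: g_prec_def g_adj_commute g_odd_def g_adj_def)

lemma g_prec_two_step_parity:
  assumes "g_prec k u c" "g_prec k c v"
  shows "g_even u" "g_odd v"
  using g_prec_cases[OF assms(1)] g_prec_cases[OF assms(2)] by (auto simp: g_odd_def g_even_def)

lemma g_odd_no_successor: "g_odd u \<Longrightarrow> \<not> g_prec k u v"
  by (auto simp: g_prec_def g_adj_def g_odd_def g_even_def)

lemma g_preceq_cases:
  assumes "g_preceq k u v"
  shows "u = v \<or> g_prec k u v \<or> (\<exists>c. g_prec k u c \<and> g_prec k c v)"
  using assms unfolding g_preceq_def
proof (induction rule: rtranclp_induct)
  case (step y z)
  then show ?case
    using g_prec_two_step_parity(2) g_odd_no_successor by blast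
qed simp

lemma g_prec_two_step_gnorm:
  assumes "g_prec k u c" "g_prec k c v"
  shows "gnorm u v = 1"
proof -
  note parity = g_prec_two_step_parity[OF assms]
  have G: "u \<in> Grid k" "c \<in> Grid k" "v \<in> Grid k"
    using assms by (auto simp: g_prec_def g_adj_def)
  obtain n :: int where n: "gnorm u v = of_int n" "0 \<le> n" "odd n"
    by (rule gnorm_integral_parity[OF G(1,3)]) (use parity in \<open>auto simp: g_even_def g_odd_def\<close>)
  have "gnorm u v \<le> gnorm u c + gnorm c v"
    using G by (intro gnorm_triangle) (simp_all add: Grid_nonneg)
  also have "\<dots> = 2"
    using assms by (simp add: g_prec_def g_adj_def)
  finally have "n \<le> 2"
    using n(1) by simp
  with n(2,3) have "n = 1"
    by presburger
  then show "gnorm u v = 1"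
    using n(1) by simp
qed

lemma g_preceq_gnorm_le: "g_preceq k u v \<Longrightarrow> gnorm u v \<le> 1"
  using g_preceq_cases[of k u v] g_prec_two_step_gnorm[of k u _ v] unfolding g_prec_def g_adj_def
  by fastforce

definition rounding_pair :: "nat \<Rightarrow> gpt \<Rightarrow> gpt \<times> gpt \<Rightarrow> bool" where
  "rounding_pair k m uv \<longleftrightarrow>
    fst uv \<in> Grid k \<and> snd uv \<in> Grid k \<and> g_preceq k (fst uv) (snd uv) \<and> gmid k (fst uv) (snd uv) = m"

lemma g_floorceil_eq: "g_floorceil k p q = (THE uv. rounding_pair k (gmid k p q) uv)"
  by (simp add: g_floorceil_def rounding_pair_def)

lemma gmid_integral_mismatch:
  assumes "u \<in> Grid k" "v \<in> Grid k" "u' \<in> Grid k" "v' \<in> Grid k" "gmid k u v = gmid k u' v'"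
  shows "g_integral u = g_integral v \<longleftrightarrow> g_integral u' = g_integral v'"
proof -
  obtain b1 b2 b3 b4 where b: "snd u = of_int b1 / 2" "snd v = of_int b2 / 2" "snd u' = of_int b3 / 2"
      "snd v' = of_int b4 / 2"
    and "g_integral u \<longleftrightarrow> even b1" "g_integral v \<longleftrightarrow> even b2"
      "g_integral u' \<longleftrightarrow> even b3" "g_integral v' \<longleftrightarrow> even b4"
    using assms(1-4) by (metis Grid_coordsE)
  moreover have "of_int (b1 + b2) = (of_int (b3 + b4) :: real)"
    using arg_cong[OF assms(5), of snd] by (simp add: gmid_def b field_simps)
  then have "b1 + b2 = b3 + b4"
    by simp
  ultimately show ?thesis
    by (metis even_add)
qed

lemma g_prec_gmid_quarter:
  assumes "g_prec k u v"
  shows "tdist (fst u) (fst (gmid k u v)) = 1/4" "tdist (fst (gmid k u v)) (fst v) = 1/4"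
    and "\<bar>snd u - snd (gmid k u v)\<bar> = 1/4" "\<bar>snd (gmid k u v) - snd v\<bar> = 1/4"
proof -
  have "g_adj k u v"
    using assms by (simp add: g_prec_def)
  then have "tvalid k (fst u)" "tvalid k (fst v)"
    and "tdist (fst u) (fst v) = 1/2" "\<bar>snd u - snd v\<bar> = 1/2"
    by (auto simp: g_adj_def Grid_tvalid g_adj_halves)
  with gmid_halfway[of k u v]
  show "tdist (fst u) (fst (gmid k u v)) = 1/4" "tdist (fst (gmid k u v)) (fst v) = 1/4"
      "\<bar>snd u - snd (gmid k u v)\<bar> = 1/4" "\<bar>snd (gmid k u v) - snd v\<bar> = 1/4"
    by simp_all
qed

lemma g_prec_unique_by_gmid:
  assumes "g_prec k u v" "g_prec k u' v'" "gmid k u v = gmid k u' v'"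
  shows "u = u' \<and> v = v'"
proof -
  define m where "m = gmid k u v"
  have G: "u \<in> Grid k" "v \<in> Grid k" "u' \<in> Grid k" "v' \<in> Grid k"
    and mismatch: "g_integral u \<noteq> g_integral v" "g_integral u' \<noteq> g_integral v'"
    using assms(1,2) by (auto simp: g_prec_def g_adj_def)
  have "tvalid k (fst m)"
    using gmid_halfway(1) G(1,2) by (simp add: m_def Grid_tvalid)
  then have "0 \<le> fst (fst m)"
    by (simp add: tvalid_def)
  note quarter = g_prec_gmid_quarter[OF assms(1), folded m_def]
    g_prec_gmid_quarter[OF assms(2), folded assms(3) m_def]
  \<comment> \<open>each of \<open>u, v\<close> is within \<open>1/2\<close> of each of \<open>u', v'\<close> in both components\<close>
  have close: "w = w'"
    if "w \<in> {u, v}" "w' \<in> {u', v'}" "w \<in> Grid k" "w' \<in> Grid k" "g_integral w = g_integral w'" for w w'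
  proof (rule Grid_eq_if_same_integral_close[OF that(3-5)])
    have "tdist (fst w) (fst w') \<le> tdist (fst w) (fst m) + tdist (fst m) (fst w')"
      using that(3,4) \<open>0 \<le> fst (fst m)\<close> by (intro tdist_triangle) (simp_all add: Grid_nonneg)
    then show "tdist (fst w) (fst w') < 1"
      using that(1,2) quarter by (auto simp: tdist_commute)
    show "\<bar>snd w - snd w'\<bar> < 1"
      using that(1,2) quarter by (auto simp: abs_minus_commute abs_if split: if_splits)
  qed
  show ?thesis
  proof (cases "g_integral u = g_integral u'")
    case True
    then show ?thesis
      using close G mismatch by (metis insertI1 insertI2)
  next
    case False
    then have "u = v'" "v = u'"
      using close G mismatch by (metis insertI1 insertI2)+
    then show ?thesis
      using assms(1,2) g_prec_asym by blast
  qed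
qed

lemma g_prec_two_step_unique_by_gmid:
  assumes "g_prec k u c" "g_prec k c v" "g_prec k u' c'" "g_prec k c' v'" "gmid k u v = gmid k u' v'"
  shows "u = u' \<and> v = v'"
proof -
  define m where "m = gmid k u v"
  have G: "u \<in> Grid k" "v \<in> Grid k" "u' \<in> Grid k" "v' \<in> Grid k"
    using assms(1-4) by (auto simp: g_prec_def g_adj_def)
  have "tvalid k (fst m)"
    using gmid_halfway(1) G(1,2) by (simp add: m_def Grid_tvalid)
  then have m0: "0 \<le> fst (fst m)"
    by (simp add: tvalid_def)
  have half: "gnorm u m = 1/2" "gnorm m v = 1/2" "gnorm u' m = 1/2" "gnorm m v' = 1/2"
    using g_prec_two_step_gnorm[OF assms(1,2)] g_prec_two_step_gnorm[OF assms(3,4)]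
      gmid_halfway(6,7)[OF G(1,2)[THEN Grid_tvalid]] gmid_halfway(6,7)[OF G(3,4)[THEN Grid_tvalid]]
    by (simp_all add: m_def assms(5))
  have "gnorm u u' \<le> gnorm u m + gnorm m u'" "gnorm v v' \<le> gnorm v m + gnorm m v'"
    using G m0 by (intro gnorm_triangle; simp add: Grid_nonneg)+
  then have "gnorm u u' < 2" "gnorm v v' < 2"
    using half by (simp_all add: gnorm_commute)
  then show ?thesis
    using Grid_eq_if_same_parity_close G g_prec_two_step_parity[OF assms(1,2)] g_prec_two_step_parity[OF assms(3,4)]
    by metis
qed

lemma gmid_notin_Grid_if_gnorm_1:
  assumes "u \<in> Grid k" "v \<in> Grid k" "gnorm u v = 1"
  shows "gmid k u v \<notin> Grid k"
proof
  assume m: "gmid k u v \<in> Grid k"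
  have "gnorm u (gmid k u v) = 1/2"
    using gmid_halfway(6)[of k u v] assms by (simp add: Grid_tvalid)
  moreover have "gnorm u (gmid k u v) \<in> \<int>"
    using gnorm_Grid_in_Ints[OF assms(1) m] .
  moreover have "(1/2 :: real) \<notin> \<int>"
    using half_of_int_in_Ints_iff[of 1] by simp
  ultimately show False
    by metis
qed

lemma rounding_pair_cases:
  assumes "rounding_pair k m (u, v)"
  obtains (refl) "u = m" "v = m" "m \<in> Grid k"
  | (step) "g_prec k u v" "g_integral u \<noteq> g_integral v"
  | (two_step) c where "g_prec k u c" "g_prec k c v" "m \<notin> Grid k" "g_integral u" "g_integral v"
proof -
  have G: "u \<in> Grid k" "v \<in> Grid k" and m: "gmid k u v = m" and "g_preceq k u v"
    using assms by (auto simp: rounding_pair_def)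
  then consider "u = v" | "g_prec k u v" | c where "g_prec k u c" "g_prec k c v"
    using g_preceq_cases by blast
  then show ?thesis
  proof cases
    case 1
    then show ?thesis
      using refl G m gmid_self[OF Grid_tvalid[OF G(1)]] by simp
  next
    case 2
    then show ?thesis
      using step by (simp add: g_prec_def g_adj_def)
  next
    case (3 c)
    then show ?thesis
      using two_step[OF 3] g_prec_two_step_parity[OF 3] gmid_notin_Grid_if_gnorm_1[OF G]
        g_prec_two_step_gnorm[OF 3] m by (simp add: g_even_def g_odd_def)
  qed
qed

text \<open>The midpoint determines the shape of a rounding pair: only \<open>u = v\<close> gives a grid point, and only a
  single step mixes an integral with a half-integral point.\<close>

lemma rounding_pair_unique:
  assumes uv: "rounding_pair k m (u, v)" and uv': "rounding_pair k m (u', v')"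
  shows "u = u' \<and> v = v'"
proof -
  have "gmid k u v = gmid k u' v'"
    and "g_integral u = g_integral v \<longleftrightarrow> g_integral u' = g_integral v'"
    using assms gmid_integral_mismatch[of u k v u' v'] by (auto simp: rounding_pair_def)
  then show ?thesis
    by (cases rule: rounding_pair_cases[OF uv]; cases rule: rounding_pair_cases[OF uv'])
      (auto dest: g_prec_unique_by_gmid g_prec_two_step_unique_by_gmid)
qed

section \<open>Existence of rounding pairs\<close>

definition grid_point :: "nat \<Rightarrow> int \<Rightarrow> int \<Rightarrow> gpt" where
  "grid_point s a b = (ray s (of_int a / 2), of_int b / 2)"

lemma grid_point_props:
  assumes "s \<in> {1..k}" "0 \<le> a"
  shows "grid_point s a b \<in> Grid k \<longleftrightarrow> even a = even b"
    and "g_integral (grid_point s a b) \<longleftrightarrow> even a \<and> even b"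
    and "g_even (grid_point s a b) \<longleftrightarrow> even a \<and> even b \<and> 4 dvd (a - b)"
  using Grid_half_coords[OF tvalid_ray[OF assms(1)], of "of_int a / 2" a b] assms
  by (simp_all add: grid_point_def)

lemma gnorm_grid_point:
  "0 \<le> a \<Longrightarrow> 0 \<le> a' \<Longrightarrow> gnorm (grid_point s a b) (grid_point s a' b') = of_int (\<bar>a - a'\<bar> + \<bar>b - b'\<bar>) / 2"
  by (simp add: grid_point_def gnorm_def tdist_ray abs_if field_simps)

lemma gmid_grid_point:
  "s \<in> {1..k} \<Longrightarrow> 0 \<le> a \<Longrightarrow> 0 \<le> a' \<Longrightarrow>
    gmid k (grid_point s a b) (grid_point s a' b') = (ray s (of_int (a + a') / 4), of_int (b + b') / 4)"
  by (simp add: grid_point_def gmid_def tmid_ray ray_mid_def field_simps)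

lemma g_adj_grid_point:
  assumes "s \<in> {1..k}" "0 \<le> a" "0 \<le> a'" "even a = even b" "even a' = even b'" "even a \<noteq> even a'"
    and "\<bar>a - a'\<bar> + \<bar>b - b'\<bar> = 2"
  shows "g_adj k (grid_point s a b) (grid_point s a' b')"
  using assms grid_point_props[OF assms(1)] by (simp add: g_adj_def gnorm_grid_point)

lemma rounding_pair_of_adj:
  assumes "g_adj k u v"
  shows "\<exists>uv. rounding_pair k (gmid k u v) uv"
proof -
  have G: "u \<in> Grid k" "v \<in> Grid k"
    using assms by (auto simp: g_adj_def)
  then have "gmid k u v = gmid k v u"
    by (simp add: gmid_commute Grid_tvalid)
  then show ?thesis
    using g_adj_prec[OF assms] G unfolding rounding_pair_def g_preceq_def
    by (metis fst_conv snd_conv r_into_rtranclp)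
qed

lemma rounding_pair_of_common_neighbour:
  assumes "g_adj k u c" "g_adj k c v" "g_integral u" "g_integral v" "g_even u \<noteq> g_even v"
  shows "\<exists>uv. rounding_pair k (gmid k u v) uv"
proof -
  have G: "u \<in> Grid k" "v \<in> Grid k"
    using assms by (auto simp: g_adj_def)
  then have "gmid k u v = gmid k v u"
    by (simp add: gmid_commute Grid_tvalid)
  moreover have "g_prec k u c \<and> g_prec k c v \<or> g_prec k v c \<and> g_prec k c u"
    using assms by (auto simp: g_prec_def g_odd_def g_adj_commute)
  then have "g_preceq k u v \<or> g_preceq k v u"
    unfolding g_preceq_def by (meson converse_rtranclp_into_rtranclp r_into_rtranclp)
  ultimately show ?thesis
    using G unfolding rounding_pair_def by (metis fst_conv snd_conv)
qed

lemma gmid_Grid_form: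
  assumes "p \<in> Grid k" "q \<in> Grid k"
  obtains s A B where "gmid k p q = (ray s (of_int A / 4), of_int B / 4)" "s \<in> {1..k}" "0 \<le> A" "even A = even B"
proof -
  obtain a b where p: "fst (fst p) = of_int a / 2" "snd p = of_int b / 2" "0 \<le> a" "even a = even b"
    by (rule Grid_coordsE[OF assms(1)])
  obtain a' b' where q: "fst (fst q) = of_int a' / 2" "snd q = of_int b' / 2" "0 \<le> a'" "even a' = even b'"
    by (rule Grid_coordsE[OF assms(2)])
  define s s' where "s = snd (fst p)" and "s' = snd (fst q)"
  have s: "s \<in> {1..k}" "s' \<in> {1..k}"
    using assms by (auto simp: s_def s'_def Grid_def tvalid_def)
  have "fst p = ray s (of_int a / 2)" "fst q = ray s' (of_int a' / 2)"
    using ray_fst_snd[OF Grid_tvalid[OF assms(1)]] ray_fst_snd[OF Grid_tvalid[OF assms(2)]] p(1) q(1)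
    by (simp_all add: s_def s'_def)
  then have m: "gmid k p q = (ray_mid s (of_int a / 2) s' (of_int a' / 2), of_int (b + b') / 4)"
    using tmid_ray[OF s] p(2,3) q(2,3) by (simp add: gmid_def field_simps)
  have parity: "even (a + a') = even (b + b')" "even (a - a') = even (b + b')" "even (a' - a) = even (b + b')"
    using p(4) q(4) by auto
  show ?thesis
  proof (cases "s = s'")
    case True
    then show ?thesis
      using that[of s "a + a'" "b + b'"] m s parity p(3) q(3) by (simp add: ray_mid_def field_simps)
  next
    case False
    then show ?thesis
      using that[of s "a - a'" "b + b'"] that[of s' "a' - a" "b + b'"] m s parity
      by (cases "a' \<le> a") (simp_all add: ray_mid_def field_simps)
  qed
qed

lemma rounding_pair_of_grid_point_chain:
  assumes s: "s \<in> {1..k}" and "0 \<le> a" "0 \<le> c" "0 \<le> a'"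
    and "even a" "even b" "odd c" "odd d" "even a'" "even b'"
    and "\<bar>a - c\<bar> + \<bar>b - d\<bar> = 2" "\<bar>c - a'\<bar> + \<bar>d - b'\<bar> = 2" "(4 dvd (a - b)) \<noteq> (4 dvd (a' - b'))"
  shows "\<exists>uv. rounding_pair k (gmid k (grid_point s a b) (grid_point s a' b')) uv"
  using assms grid_point_props[OF s]
  by (intro rounding_pair_of_common_neighbour[where c = "grid_point s c d"] g_adj_grid_point[OF s]) auto

lemma rounding_pair_exists:
  assumes s: "s \<in> {1..k}" and "0 \<le> A" "even A = even B"
  shows "\<exists>uv. rounding_pair k (ray s (of_int A / 4), of_int B / 4) uv"
proof (cases "odd A")
  case True
  then obtain a b where ab: "A = 2 * a + 1" "B = 2 * b + 1"
    using assms(3) by (metis oddE)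
  then have "0 \<le> a"
    using assms(2) by linarith
  have "g_adj k (grid_point s a b') (grid_point s (a + 1) b'')"
    if "\<bar>b' - b''\<bar> = 1" "even a = even b'" for b' b''
    by (intro g_adj_grid_point[OF s]) (use that \<open>0 \<le> a\<close> in presburger)+
  moreover have mid: "gmid k (grid_point s a b') (grid_point s (a + 1) b'') = (ray s (of_int A / 4), of_int B / 4)"
    if "b' + b'' = B" for b' b''
    using that ab \<open>0 \<le> a\<close> gmid_grid_point[OF s] by (simp add: algebra_simps)
  moreover have "\<exists>b' b''. \<bar>b' - b''\<bar> = 1 \<and> even a = even b' \<and> b' + b'' = B"
    using ab by presburger
  ultimately show ?thesis
    using rounding_pair_of_adj by metis
next
  case False
  then obtain a b where ab: "A = 2 * a" "B = 2 * b"
    using assms(3) by (metis evenE)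
  then have "0 \<le> a"
    using assms(2) by linarith
  note props = grid_point_props[OF s] and mid = gmid_grid_point[OF s]
  consider (refl) "even a = even b" | (horizontal) "odd a" "even b" | (vertical) "even a" "odd b"
    by blast
  then show ?thesis
  proof cases
    case refl
    then have "rounding_pair k (ray s (of_int A / 4), of_int B / 4) (grid_point s a b, grid_point s a b)"
      using props[OF \<open>0 \<le> a\<close>] mid[OF \<open>0 \<le> a\<close> \<open>0 \<le> a\<close>] ab
      by (simp add: rounding_pair_def g_preceq_def field_simps)
    then show ?thesis ..
  next
    case horizontal
    then have "1 \<le> a"
      using \<open>0 \<le> a\<close> by presburger
    then have "gmid k (grid_point s (a - 1) b) (grid_point s (a + 1) b) = (ray s (of_int A / 4), of_int B / 4)"
      using mid ab by (simp add: field_simps)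
    moreover have "(4 dvd (a - 1 - b)) \<noteq> (4 dvd (a + 1 - b))"
      using horizontal by presburger
    ultimately show ?thesis
      using rounding_pair_of_grid_point_chain[OF s, of "a - 1" a "a + 1" b "b + 1" b] horizontal \<open>1 \<le> a\<close>
      by simp
  next
    case vertical
    have "gmid k (grid_point s a (b - 1)) (grid_point s a (b + 1)) = (ray s (of_int A / 4), of_int B / 4)"
      using \<open>0 \<le> a\<close> mid ab by (simp add: field_simps)
    moreover have "(4 dvd (a - (b - 1))) \<noteq> (4 dvd (a - (b + 1)))"
      using vertical by presburger
    ultimately show ?thesis
      using rounding_pair_of_grid_point_chain[OF s, of a "a + 1" a "b - 1" b "b + 1"] vertical \<open>0 \<le> a\<close>
      by simp
  qed
qed

lemma rounding_pair_g_floor_g_ceil: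
  assumes "p \<in> Grid k" "q \<in> Grid k"
  shows "rounding_pair k (gmid k p q) (g_floor k p q, g_ceil k p q)"
proof -
  obtain s A B where "gmid k p q = (ray s (of_int A / 4), of_int B / 4)" "s \<in> {1..k}" "0 \<le> A" "even A = even B"
    using gmid_Grid_form[OF assms] .
  then have "\<exists>uv. rounding_pair k (gmid k p q) uv"
    using rounding_pair_exists by presburger
  moreover have "uv = uv'" if "rounding_pair k (gmid k p q) uv" "rounding_pair k (gmid k p q) uv'" for uv uv'
    using rounding_pair_unique[of k _ "fst uv" "snd uv" "fst uv'" "snd uv'"] that by (simp add: prod_eq_iff)
  ultimately have "rounding_pair k (gmid k p q) (g_floorceil k p q)"
    unfolding g_floorceil_eq by (metis theI)
  then show ?thesis
    by (simp add: g_floor_def g_ceil_def)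
qed

lemma rounding_pair_gnorm_bounds:
  assumes "p \<in> Grid k" "q \<in> Grid k" "rounding_pair k (gmid k p q) (u, v)" "w \<in> {u, v}"
  shows "gnorm p w \<le> gnorm p q / 2 + 1/2" "1 < gnorm p q \<Longrightarrow> w \<noteq> p" "1 < gnorm p q \<Longrightarrow> w \<noteq> q"
proof -
  define m where "m = gmid k p q"
  have G: "u \<in> Grid k" "v \<in> Grid k" "w \<in> Grid k" and uv: "gmid k u v = m" "g_preceq k u v"
    using assms(3,4) by (auto simp: rounding_pair_def m_def)
  have m: "tvalid k (fst m)" "gnorm p m = gnorm p q / 2" "gnorm m q = gnorm p q / 2"
    using gmid_halfway[OF assms(1,2)[THEN Grid_tvalid]] by (simp_all add: m_def)
  have "gnorm w m = gnorm u v / 2"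
    using gmid_halfway(6,7)[OF G(1,2)[THEN Grid_tvalid]] assms(4) uv(1) by (auto simp: gnorm_commute)
  then have wm: "gnorm w m \<le> 1/2"
    using g_preceq_gnorm_le[OF uv(2)] by simp
  have "gnorm p w \<le> gnorm p m + gnorm m w"
    using assms(1) G(3) m(1) by (intro gnorm_triangle) (simp_all add: Grid_nonneg tvalid_def)
  then show "gnorm p w \<le> gnorm p q / 2 + 1/2"
    using m(2) wm by (simp add: gnorm_commute)
  show "1 < gnorm p q \<Longrightarrow> w \<noteq> p" "1 < gnorm p q \<Longrightarrow> w \<noteq> q"
    using m(2,3) wm by (auto simp: gnorm_commute)
qed

lemma gnorm_le_vnorm: "gnorm (p i) (q i) \<le> vnorm p q"
  by (simp add: vnorm_def)

lemma vnorm_attained: obtains i where "gnorm (p i) (q i) = vnorm p q"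
proof -
  have "vnorm p q \<in> range (\<lambda>i. gnorm (p i) (q i))"
    unfolding vnorm_def by (rule Max_in) simp_all
  then obtain i where "vnorm p q = gnorm (p i) (q i)"
    by blast
  then show ?thesis
    using that by simp
qed

lemma vnorm_less: "(\<And>i. gnorm (p i) (r i) < c) \<Longrightarrow> vnorm p r < c"
  by (simp add: vnorm_def)

theorem lemma4p4:
  fixes k :: nat and p q :: "'n::finite \<Rightarrow> gpt"
  assumes "k \<ge> 1"
    and "\<forall>i. p i \<in> Grid k" and "\<forall>i. q i \<in> Grid k"
    and "vnorm p q \<ge> 2"
  shows "v_ceil k p q \<notin> {p, q} \<and> v_floor k p q \<notin> {p, q}
    \<and> vnorm p (v_ceil k p q) < vnorm p q \<and> vnorm p (v_floor k p q) < vnorm p q"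
proof -
  have rounding: "rounding_pair k (gmid k (p i) (q i)) (v_floor k p q i, v_ceil k p q i)" for i
    using rounding_pair_g_floor_g_ceil assms(2,3) by (simp add: v_floor_def v_ceil_def)
  have bounds: "gnorm (p i) (w i) \<le> gnorm (p i) (q i) / 2 + 1/2"
      "1 < gnorm (p i) (q i) \<Longrightarrow> w i \<noteq> p i \<and> w i \<noteq> q i"
    if "w \<in> {v_floor k p q, v_ceil k p q}" for w i
    using rounding_pair_gnorm_bounds[OF _ _ rounding[of i], where w = "w i"] assms(2,3) that by auto
  obtain i where "gnorm (p i) (q i) = vnorm p q"
    by (rule vnorm_attained)
  then have i: "1 < gnorm (p i) (q i)"
    using assms(4) by simp
  have "vnorm p w < vnorm p q \<and> w \<noteq> p \<and> w \<noteq> q" if "w \<in> {v_floor k p q, v_ceil k p q}" for w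
  proof (intro conjI)
    have "gnorm (p j) (w j) < vnorm p q" for j
      using bounds(1)[OF that, of j] gnorm_le_vnorm[of p j q] assms(4) by linarith
    then show "vnorm p w < vnorm p q"
      by (rule vnorm_less)
    show "w \<noteq> p" "w \<noteq> q"
      using bounds(2)[OF that i] by auto
  qed
  then show ?thesis
    by auto
qed

end
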